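(* Let $\mathbb{A}=\{a_n\}_{n\in\mathbb{N}^+}$ be a set of integers $\ge2$, listed in increasing order, and let $\mathbb{A}'=\{a'_n\}_{n\in\mathbb{N}^+}\subset\mathbb{A}$ be a subset such that $\sum_{n=1}^{\infty}e^{-a'_n t}$ is majorized by $t^{-1/2}$ as $t\to0^+$. Let $\tilde{\mathbb{A}}=\mathbb{A}\setminus\mathbb{A}'=\{\tilde a_n\}_{n\in\mathbb{N}^+}$, listed in increasing order. If for some $i,j\in\mathbb{N}$ the Dirichlet series $$\mathcal{D}_{\{\tilde a_{2^i n+j}\}_{n\in\mathbb{N}^+}}(s)=\sum_{n=1}^{\infty}\tilde a_{2^in+j}^{-s}$$ admits a non-singular analytic continuation to some domain $\mathcal{U}\subset\mathbb{C}$, then (the continuation of) $\zeta_{\mathbb{A}}$ satisfies $\zeta_{\mathbb{A}}(s)\neq0$ for all $s\in\mathcal{U}\cap\{s:\Re(s)>1/2\}$.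
   Context: For a strictly increasing sequence $\mathbb{B}=\{b_n\}$ of positive integers, $\mathcal{D}_{\mathbb{B}}(s)=\sum_n b_n^{-s}$, and if $1\notin\mathbb{B}$, $\zeta_{\mathbb{B}}(s)=\prod_n \frac{1}{1-b_n^{-s}}$ (defined for $\Re(s)>1$ and by analytic continuation elsewhere). "$\sum e^{-a'_nt}$ is majorized by $t^{-1/2}$ as $t\to0^+$" means there is $C>0$ with $\sum_n e^{-a'_nt}\le Ct^{-1/2}$ for all sufficiently small $t>0$. *)

theory Defs
  imports "HOL-Analysis.Analysis"
begin

text \<open>The increasing enumeration of an infinite set of naturals, 0-indexed:
  nth_elem B 0 is the least element (b_1 in the paper), nth_elem B n = b_(n+1).\<close>
definition nth_elem :: "nat set \<Rightarrow> nat \<Rightarrow> nat" where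
  "nth_elem B n = Infinite_Set.enumerate B n"

definition dirichlet_D :: "nat set \<Rightarrow> complex \<Rightarrow> complex" where
  "dirichlet_D B s = (\<Sum>n. (of_nat (nth_elem B n) :: complex) powr (- s))"

definition zeta_B :: "nat set \<Rightarrow> complex \<Rightarrow> complex" where
  "zeta_B B s = (\<Prod>n. inverse (1 - (of_nat (nth_elem B n) :: complex) powr (- s)))"

end

theory Submission
  imports Defs "HOL-Complex_Analysis.Cauchy_Integral_Formula" "HOL-Real_Asymp.Real_Asymp"
begin

text \<open>
  For Re s > 1, log zeta_A = D_A + R_A, where the Euler remainder
  R_A(s) = sum (- Ln (1 - a^-s) - a^-s) is dominated by sum a^(-2 Re s) and so is holomorphic
  for Re s > 1/2. Write D_A = D_A' + D_A~ with A~ = A - A'. Evaluating the heat trace of A'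
  at t = 1 / a'_n bounds n + 1 by e C sqrt(a'_n), so D_A' converges for Re s > 1/2 as well.
  Grouping the terms of D_A~ into blocks of m = 2^i consecutive indices, each term differs from
  the first one of its block by a~_(mk+c+r)^-s - a~_(mk+c)^-s; these differences are dominated by
  the telescoping series of a~_(mk+c)^(-Re s) and sum to a function holomorphic for Re s > 0.
  Hence zeta_A = exp (H + m D_B) with H holomorphic for Re s > 1/2, and substituting the given
  continuation of D_B yields a continuation of zeta_A which, being an exponential, has no zeros.
\<close>

subsection \<open>Series of holomorphic functions\<close>

lemma holomorphic_on_suminf_locally_dominated:
  fixes g :: "nat \<Rightarrow> complex \<Rightarrow> complex"
  assumes "open S" and hol: "\<And>n. g n holomorphic_on S"
    and dom: "\<And>z. z \<in> S \<Longrightarrow> \<exists>d>0. cball z d \<subseteq> S \<and>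
                 (\<exists>M. summable M \<and> (\<forall>n. \<forall>w\<in>cball z d. norm (g n w) \<le> M n))"
  shows "(\<lambda>s. \<Sum>n. g n s) holomorphic_on S"
proof -
  have "\<exists>d>0. cball z d \<subseteq> S \<and>
      uniform_limit (cball z d) (\<lambda>n s. \<Sum>i<n. g i s) (\<lambda>s. \<Sum>n. g n s) sequentially"
    if z: "z \<in> S" for z
  proof -
    obtain d M where "d > 0" "cball z d \<subseteq> S" "summable M"
      and "\<forall>n. \<forall>w\<in>cball z d. norm (g n w) \<le> M n"
      using dom[OF z] by blast
    then show ?thesis
      using Weierstrass_m_test[of "cball z d" g M] by blast
  qed
  then show ?thesis
    by (rule holomorphic_uniform_sequence[OF \<open>open S\<close>, rotated]) (auto intro!: holomorphic_on_sum hol)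
qed

lemma Re_ge_of_mem_cball:
  assumes "w \<in> cball z d"
  shows "Re z - d \<le> Re w"
proof -
  have "Re z - Re w \<le> norm (z - w)"
    using abs_Re_le_cmod[of "z - w"] by simp
  moreover have "norm (z - w) \<le> d"
    using assms by (simp add: dist_norm)
  ultimately show ?thesis by linarith
qed

lemma holomorphic_on_suminf_Re_gt:
  fixes g :: "nat \<Rightarrow> complex \<Rightarrow> complex"
  assumes hol: "\<And>n. g n holomorphic_on {s. \<sigma> < Re s}"
    and dom: "\<And>\<sigma>'. \<sigma> < \<sigma>' \<Longrightarrow>
               \<exists>M. summable M \<and> (\<forall>n s. \<sigma>' \<le> Re s \<longrightarrow> norm (g n s) \<le> M n)"
  shows "(\<lambda>s. \<Sum>n. g n s) holomorphic_on {s. \<sigma> < Re s}"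
proof (rule holomorphic_on_suminf_locally_dominated[OF open_halfspace_Re_gt hol])
  fix z assume "z \<in> {s. \<sigma> < Re s}"
  define d where "d = (Re z - \<sigma>) / 2"
  have "d > 0" using \<open>z \<in> {s. \<sigma> < Re s}\<close> by (simp add: d_def)
  have Re_ge: "\<sigma> + d \<le> Re w" if "w \<in> cball z d" for w
    using Re_ge_of_mem_cball[OF that] unfolding d_def by (simp add: field_simps)
  have "cball z d \<subseteq> {s. \<sigma> < Re s}"
  proof
    fix w assume "w \<in> cball z d"
    with Re_ge \<open>d > 0\<close> show "w \<in> {s. \<sigma> < Re s}" by force
  qed
  moreover have "\<sigma> < \<sigma> + d" using \<open>d > 0\<close> by simp
  then obtain M where "summable M" and M: "\<forall>n s. \<sigma> + d \<le> Re s \<longrightarrow> norm (g n s) \<le> M n"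
    using dom[OF \<open>\<sigma> < \<sigma> + d\<close>] by blast
  moreover have "\<forall>n. \<forall>w\<in>cball z d. norm (g n w) \<le> M n"
    using M Re_ge by simp
  ultimately show "\<exists>d>0. cball z d \<subseteq> {s. \<sigma> < Re s} \<and>
      (\<exists>M. summable M \<and> (\<forall>n. \<forall>w\<in>cball z d. norm (g n w) \<le> M n))"
    using \<open>d > 0\<close> by blast
qed

lemma norm_of_nat_powr: "norm ((of_nat x :: complex) powr s) = real x powr Re s"
  by (subst norm_powr_real_powr) auto

lemma summable_powr_of_Suc_le:
  fixes e :: "nat \<Rightarrow> nat"
  assumes "\<And>n. Suc n \<le> e n" and "1 < \<sigma>"
  shows "summable (\<lambda>n. real (e n) powr (-\<sigma>))"
proof (rule summable_comparison_test')
  have "summable (\<lambda>n. real n powr (-\<sigma>))"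
    using \<open>1 < \<sigma>\<close> by (simp add: summable_real_powr_iff)
  then show "summable (\<lambda>n. real (Suc n) powr (-\<sigma>))"
    using summable_iff_shift[of "\<lambda>n. real n powr (-\<sigma>)" 1] by simp
  show "norm (real (e n) powr (-\<sigma>)) \<le> real (Suc n) powr (-\<sigma>)" for n
    using assms(1)[of n] \<open>1 < \<sigma>\<close> by (simp add: powr_mono2')
qed

lemma holomorphic_on_nat_dirichlet_series:
  fixes e :: "nat \<Rightarrow> nat"
  assumes pos: "\<And>n. 0 < e n"
    and summable: "\<And>\<sigma>'. \<sigma> < \<sigma>' \<Longrightarrow> summable (\<lambda>n. real (e n) powr (-\<sigma>'))"
  shows "(\<lambda>s. \<Sum>n. (of_nat (e n) :: complex) powr (-s)) holomorphic_on {s. \<sigma> < Re s}"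
proof (rule holomorphic_on_suminf_Re_gt)
  show "(\<lambda>s. (of_nat (e n) :: complex) powr (-s)) holomorphic_on {s. \<sigma> < Re s}" for n
    by (intro holomorphic_intros)
  fix \<sigma>' assume "\<sigma> < \<sigma>'"
  have "norm ((of_nat (e n) :: complex) powr (-s)) \<le> real (e n) powr (-\<sigma>')"
    if "\<sigma>' \<le> Re s" for n s
    using pos[of n] that unfolding norm_of_nat_powr by (intro powr_mono) auto
  then show "\<exists>M. summable M \<and> (\<forall>n s. \<sigma>' \<le> Re s \<longrightarrow> norm ((of_nat (e n) :: complex) powr (-s)) \<le> M n)"
    using summable[OF \<open>\<sigma> < \<sigma>'\<close>] by blast
qed

lemma summable_norm_nat_dirichlet_series:
  fixes e :: "nat \<Rightarrow> nat"
  assumes "\<And>n. Suc n \<le> e n" and "1 < Re s"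
  shows "summable (\<lambda>n. norm ((of_nat (e n) :: complex) powr (-s)))"
  using summable_powr_of_Suc_le[OF assms] by (simp add: norm_of_nat_powr)

lemma nth_elem_ge:
  assumes "infinite B" and "\<forall>b\<in>B. k \<le> b"
  shows "n + k \<le> nth_elem B n"
  unfolding nth_elem_def
proof (induction n)
  case 0
  show ?case using enumerate_in_set[OF assms(1), of 0] assms(2) by auto
next
  case (Suc n)
  then show ?case using enumerate_step[OF assms(1), of n] by linarith
qed

lemma Suc_le_nth_elem:
  assumes "infinite B" and "0 \<notin> B"
  shows "Suc n \<le> nth_elem B n"
proof -
  have "\<forall>b\<in>B. 1 \<le> b" using assms(2) by (metis leI less_one)
  from nth_elem_ge[OF assms(1) this] show ?thesis by simp
qed

lemma strict_mono_nth_elem: "infinite B \<Longrightarrow> strict_mono (nth_elem B)"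
  unfolding nth_elem_def by (rule strict_mono_enumerate)

lemma strict_mono_nth_elem_affine:
  assumes "infinite B" and "0 < m"
  shows "strict_mono (\<lambda>k. nth_elem B (m * k + c))"
  using \<open>0 < m\<close> by (intro strict_monoI strict_monoD[OF strict_mono_nth_elem[OF assms(1)]]) simp

lemma nth_elem_range:
  fixes g :: "nat \<Rightarrow> nat"
  assumes "strict_mono g"
  shows "nth_elem (range g) n = g n"
  unfolding nth_elem_def
proof (induction n)
  case 0
  have "(LEAST x. x \<in> range g) = g 0"
    by (rule Least_equality) (auto simp: strict_mono_less_eq[OF assms])
  then show ?case by (simp add: enumerate_0)
next
  case (Suc n)
  have "infinite (range g)"
    using assms strict_mono_imp_inj_on finite_imageD by (metis infinite_UNIV_nat)
  moreover have "(LEAST x. x \<in> range g \<and> g n < x) = g (Suc n)"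
  proof (rule Least_equality)
    show "g (Suc n) \<in> range g \<and> g n < g (Suc n)"
      using assms by (auto simp: strict_mono_def)
    fix y assume "y \<in> range g \<and> g n < y"
    then obtain k where "y = g k" "n < k"
      using assms strict_mono_less by blast
    then show "g (Suc n) \<le> y" using assms by (simp add: strict_mono_less_eq)
  qed
  ultimately show ?case using enumerate_Suc''[of "range g" n] Suc by simp
qed

lemma image_atLeast_1_affine:
  fixes m :: nat
  assumes "0 < m"
  shows "(\<lambda>n. g (m * n + j - 1)) ` {1..} = range (\<lambda>k. g (m * k + (m + j - 1)))"
proof -
  have "{1..} = range Suc"
    using atLeast_Suc_greaterThan[of 0] greaterThan_0 by simp
  then show ?thesis
    using assms by (simp add: image_image algebra_simps)
qed

subsection \<open>Growth forced by a bound on the heat trace\<close>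

lemma heat_trace_bound_imp_growth:
  fixes a :: "nat \<Rightarrow> nat"
  assumes "mono a" and pos: "0 < a n" and large: "1 / \<delta> < real (a n)" and "0 < \<delta>"
    and bound: "\<forall>t. 0 < t \<and> t < \<delta> \<longrightarrow> summable (\<lambda>k. exp (- real (a k) * t)) \<and>
                 (\<Sum>k. exp (- real (a k) * t)) \<le> C * t powr (-\<alpha>)"
  shows "real (Suc n) \<le> exp 1 * C * real (a n) powr \<alpha>"
proof -
  define t where "t = 1 / real (a n)"
  have "0 < t" using pos by (simp add: t_def)
  have "t < \<delta>"
    using large pos \<open>0 < \<delta>\<close> unfolding t_def by (simp add: field_simps)
  with bound \<open>0 < t\<close> have sm: "summable (\<lambda>k. exp (- real (a k) * t))"
    and le: "(\<Sum>k. exp (- real (a k) * t)) \<le> C * t powr (-\<alpha>)"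
    by auto
  \<comment> \<open>the first \<open>n + 1\<close> terms of the trace at \<open>t = 1 / a n\<close> are all at least \<open>1 / e\<close>\<close>
  have "real (Suc n) * exp (-1) = (\<Sum>k<Suc n. exp (-1))" by simp
  also have "\<dots> \<le> (\<Sum>k<Suc n. exp (- real (a k) * t))"
  proof (rule sum_mono)
    fix k assume "k \<in> {..<Suc n}"
    then have "a k \<le> a n" using \<open>mono a\<close> by (simp add: monoD)
    then have "real (a k) * t \<le> 1" using pos unfolding t_def by (simp add: field_simps)
    then show "exp (-1) \<le> exp (- real (a k) * t)" by simp
  qed
  also have "\<dots> \<le> (\<Sum>k. exp (- real (a k) * t))"
    by (rule sum_le_suminf[OF sm]) auto
  also have "\<dots> \<le> C * t powr (-\<alpha>)" by (rule le)
  also have "t powr (-\<alpha>) = real (a n) powr \<alpha>"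
    using pos unfolding t_def by (simp add: powr_minus_divide powr_divide)
  finally show ?thesis
    by (simp add: exp_minus field_simps)
qed

lemma summable_powr_of_heat_trace_bound:
  fixes a :: "nat \<Rightarrow> nat"
  assumes "mono a" and ge: "\<And>n. Suc n \<le> a n" and "0 < \<alpha>" and "\<alpha> < \<sigma>" and "0 < \<delta>"
    and bound: "\<forall>t. 0 < t \<and> t < \<delta> \<longrightarrow> summable (\<lambda>k. exp (- real (a k) * t)) \<and>
                 (\<Sum>k. exp (- real (a k) * t)) \<le> C * t powr (-\<alpha>)"
  shows "summable (\<lambda>n. real (a n) powr (-\<sigma>))"
proof -
  define E where "E = exp 1 * C"
  obtain N :: nat where N: "1 / \<delta> < real N" using reals_Archimedean2 by blast
  have growth: "real (Suc n) \<le> E * real (a n) powr \<alpha>" if "N \<le> n" for n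
  proof -
    have "1 / \<delta> < real (a n)" using N ge[of n] that by linarith
    then show ?thesis
      unfolding E_def using heat_trace_bound_imp_growth[OF \<open>mono a\<close> _ _ \<open>0 < \<delta>\<close> bound] ge[of n] by simp
  qed
  have "0 < E * real (a N) powr \<alpha>"
    using growth[OF order_refl] by (metis of_nat_0_less_iff order_less_le_trans zero_less_Suc)
  then have "0 < E"
    by (simp add: zero_less_mult_iff)
  have "\<forall>\<^sub>F n in sequentially. norm (real (a n) powr (-\<sigma>)) \<le> E powr (\<sigma> / \<alpha>) * real (Suc n) powr (-(\<sigma> / \<alpha>))"
    unfolding eventually_sequentially
  proof (intro exI[of _ N] allI impI)
    fix n assume "N \<le> n"
    have "norm (real (a n) powr (-\<sigma>)) = (real (a n) powr \<alpha>) powr (-(\<sigma> / \<alpha>))"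
      using \<open>0 < \<alpha>\<close> by (simp add: powr_powr)
    also have "\<dots> \<le> (real (Suc n) / E) powr (-(\<sigma> / \<alpha>))"
    proof (rule powr_mono2')
      show "- (\<sigma> / \<alpha>) \<le> 0" using \<open>0 < \<alpha>\<close> \<open>\<alpha> < \<sigma>\<close> by simp
      show "0 < real (Suc n) / E" using \<open>0 < E\<close> by simp
      show "real (Suc n) / E \<le> real (a n) powr \<alpha>"
        using growth[OF \<open>N \<le> n\<close>] \<open>0 < E\<close> by (simp add: pos_divide_le_eq mult.commute)
    qed
    also have "\<dots> = E powr (\<sigma> / \<alpha>) * real (Suc n) powr (-(\<sigma> / \<alpha>))"
      using \<open>0 < E\<close> by (simp add: powr_divide powr_minus field_simps)
    finally show "norm (real (a n) powr (-\<sigma>)) \<le> E powr (\<sigma> / \<alpha>) * real (Suc n) powr (-(\<sigma> / \<alpha>))" .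
  qed
  moreover have "summable (\<lambda>n. real (Suc n) powr (-(\<sigma> / \<alpha>)))"
    using summable_powr_of_Suc_le[of Suc "\<sigma> / \<alpha>"] \<open>0 < \<alpha>\<close> \<open>\<alpha> < \<sigma>\<close> by simp
  ultimately show ?thesis
    by (rule summable_comparison_test_ev[OF _ summable_mult])
qed

subsection \<open>The logarithm of the Euler product\<close>

definition log_euler_remainder :: "(nat \<Rightarrow> nat) \<Rightarrow> complex \<Rightarrow> complex" where
  "log_euler_remainder e s =
     (\<Sum>n. - Ln (1 - of_nat (e n) powr (-s)) - of_nat (e n) powr (-s))"

lemma norm_Ln_one_minus_plus_le:
  fixes w :: complex
  assumes "norm w \<le> q" and "q < 1"
  shows "norm (- Ln (1 - w) - w) \<le> norm w ^ 2 / (1 - q)"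
proof -
  have "norm (- Ln (1 - w) - w) = norm (Ln (1 + (-w)) - (-w))"
    by (simp add: norm_minus_commute add.commute)
  also have "\<dots> \<le> norm w ^ 2 / (1 - norm w)"
    using Ln_approx_linear[of "-w"] assms by simp
  also have "\<dots> \<le> norm w ^ 2 / (1 - q)"
    using assms by (intro divide_left_mono mult_pos_pos) auto
  finally show ?thesis .
qed

lemma norm_log_euler_term_le:
  fixes x :: nat
  assumes "2 \<le> x" and "0 < \<sigma>" and "\<sigma> \<le> Re s"
  shows "norm (- Ln (1 - of_nat x powr (-s)) - of_nat x powr (-s))
           \<le> real x powr (- (2 * \<sigma>)) / (1 - 2 powr (-\<sigma>))"
proof -
  have w: "norm ((of_nat x :: complex) powr (-s)) \<le> real x powr (-\<sigma>)"
    using assms unfolding norm_of_nat_powr by (intro powr_mono) auto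
  also have "\<dots> \<le> 2 powr (-\<sigma>)"
    using assms by (intro powr_mono2') auto
  finally have "norm ((of_nat x :: complex) powr (-s)) \<le> 2 powr (-\<sigma>)" .
  moreover have q: "2 powr (-\<sigma>) < 1"
    using \<open>0 < \<sigma>\<close> by (intro powr_less_one) auto
  ultimately have "norm (- Ln (1 - of_nat x powr (-s)) - of_nat x powr (-s))
      \<le> norm ((of_nat x :: complex) powr (-s)) ^ 2 / (1 - 2 powr (-\<sigma>))"
    by (rule norm_Ln_one_minus_plus_le)
  also have "\<dots> \<le> (real x powr (-\<sigma>)) ^ 2 / (1 - 2 powr (-\<sigma>))"
    using w q by (intro divide_right_mono power_mono) auto
  also have "(real x powr (-\<sigma>)) ^ 2 = real x powr (- (2 * \<sigma>))"
    by (simp add: power2_eq_square flip: powr_add)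
  finally show ?thesis .
qed

lemma summable_log_euler_terms:
  fixes e :: "nat \<Rightarrow> nat"
  assumes e: "\<And>n. n + 2 \<le> e n" and "1/2 < \<sigma>"
  shows "\<exists>M. summable M \<and> (\<forall>n s. \<sigma> \<le> Re s \<longrightarrow>
           norm (- Ln (1 - of_nat (e n) powr (-s)) - of_nat (e n) powr (-s)) \<le> M n)"
proof (intro exI conjI allI impI)
  show "summable (\<lambda>n. real (e n) powr (- (2 * \<sigma>)) / (1 - 2 powr (-\<sigma>)))"
  proof (intro summable_divide summable_powr_of_Suc_le)
    show "Suc n \<le> e n" for n using e[of n] by simp
  qed (use \<open>1/2 < \<sigma>\<close> in simp)
  show "norm (- Ln (1 - of_nat (e n) powr (-s)) - of_nat (e n) powr (-s))
          \<le> real (e n) powr (- (2 * \<sigma>)) / (1 - 2 powr (-\<sigma>))" if "\<sigma> \<le> Re s" for n s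
    using e[of n] \<open>1/2 < \<sigma>\<close> that by (intro norm_log_euler_term_le) auto
qed

lemma holomorphic_log_euler_remainder:
  fixes e :: "nat \<Rightarrow> nat"
  assumes e: "\<And>n. n + 2 \<le> e n"
  shows "log_euler_remainder e holomorphic_on {s. 1/2 < Re s}"
  unfolding log_euler_remainder_def
proof (rule holomorphic_on_suminf_Re_gt)
  fix n
  have "1 - of_nat (e n) powr (-s) \<notin> \<real>\<^sub>\<le>\<^sub>0" if "1/2 < Re s" for s
  proof -
    have "Re (of_nat (e n) powr (-s)) \<le> norm ((of_nat (e n) :: complex) powr (-s))"
      by (rule complex_Re_le_cmod)
    also have "\<dots> = real (e n) powr (- Re s)"
      by (simp add: norm_of_nat_powr)
    also have "\<dots> < 1"
      using e[of n] that by (intro powr_less_one) auto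
    finally show ?thesis by (simp add: complex_nonpos_Reals_iff)
  qed
  then show "(\<lambda>s. - Ln (1 - of_nat (e n) powr (-s)) - of_nat (e n) powr (-s))
               holomorphic_on {s. 1/2 < Re s}"
    by (intro holomorphic_intros) auto
qed (rule summable_log_euler_terms[OF e])

lemma zeta_B_eq_exp:
  assumes "infinite A" and "\<forall>a\<in>A. 2 \<le> a" and "1 < Re s"
  shows "zeta_B A s = exp (log_euler_remainder (nth_elem A) s + dirichlet_D A s)"
proof -
  define w where "w n = (of_nat (nth_elem A n) :: complex) powr (-s)" for n
  have e: "n + 2 \<le> nth_elem A n" for n
    by (rule nth_elem_ge[OF assms(1,2)])
  obtain M where "summable M" and M: "\<forall>n s'. Re s \<le> Re s' \<longrightarrow>
      norm (- Ln (1 - of_nat (nth_elem A n) powr (-s')) - of_nat (nth_elem A n) powr (-s')) \<le> M n"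
    using summable_log_euler_terms[OF e, of "Re s"] \<open>1 < Re s\<close> by auto
  have remainder: "summable (\<lambda>n. - Ln (1 - w n) - w n)"
    by (rule summable_comparison_test'[OF \<open>summable M\<close>]) (use M in \<open>simp add: w_def\<close>)
  have "Suc n \<le> nth_elem A n" for n
    using e[of n] by simp
  then have dirichlet: "summable w"
    unfolding w_def using \<open>1 < Re s\<close>
    by (rule summable_norm_cancel[OF summable_norm_nat_dirichlet_series])
  have "norm (w n) < 1" for n
    using e[of n] \<open>1 < Re s\<close> unfolding w_def norm_of_nat_powr by (intro powr_less_one) auto
  then have "1 - w n \<noteq> 0" for n
    by (metis norm_one order.irrefl right_minus_eq)
  then have factor: "inverse (1 - w n) = exp (- Ln (1 - w n) - w n + w n)" for n
    by (simp add: exp_minus)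
  have "zeta_B A s = (\<Prod>n. inverse (1 - w n))"
    by (simp add: zeta_B_def w_def)
  also have "\<dots> = (\<Prod>n. exp (- Ln (1 - w n) - w n + w n))"
    by (simp only: factor)
  also have "\<dots> = exp (\<Sum>n. - Ln (1 - w n) - w n + w n)"
    by (rule prodinf_exp) (rule summable_add[OF remainder dirichlet])
  also have "(\<Sum>n. - Ln (1 - w n) - w n + w n) = (\<Sum>n. - Ln (1 - w n) - w n) + (\<Sum>n. w n)"
    by (rule suminf_add[OF remainder dirichlet, symmetric])
  finally show ?thesis
    unfolding log_euler_remainder_def dirichlet_D_def w_def .
qed

lemma holomorphic_dirichlet_D:
  assumes "infinite B" and "0 \<notin> B"
  shows "dirichlet_D B holomorphic_on {s. 1 < Re s}"
  unfolding dirichlet_D_def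
proof (rule holomorphic_on_nat_dirichlet_series)
  show "0 < nth_elem B n" for n
    using Suc_le_nth_elem[OF assms, of n] by simp
  show "summable (\<lambda>n. real (nth_elem B n) powr (-\<sigma>))" if "1 < \<sigma>" for \<sigma>
    using Suc_le_nth_elem[OF assms] that by (rule summable_powr_of_Suc_le)
qed

lemma has_sum_dirichlet_D:
  assumes "infinite B" and "0 \<notin> B" and "1 < Re s"
  shows "((\<lambda>x. (of_nat x :: complex) powr (-s)) has_sum dirichlet_D B s) B"
proof -
  have "summable (\<lambda>n. norm ((of_nat (nth_elem B n) :: complex) powr (-s)))"
    (is "summable (\<lambda>n. norm (?w n))")
    using Suc_le_nth_elem[OF assms(1,2)] assms(3) by (rule summable_norm_nat_dirichlet_series)
  then have "(?w has_sum dirichlet_D B s) UNIV"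
    unfolding dirichlet_D_def
    by (rule norm_summable_imp_has_sum[OF _ summable_sums[OF summable_norm_cancel]]) fact
  then show ?thesis
    using has_sum_reindex_bij_betw[OF bij_enumerate[OF assms(1)],
        where f = "\<lambda>x. (of_nat x :: complex) powr (-s)"]
    by (simp add: nth_elem_def)
qed

lemma dirichlet_D_Un:
  assumes "infinite B" and "infinite C" and "B \<inter> C = {}" and "0 \<notin> B \<union> C" and "1 < Re s"
  shows "dirichlet_D (B \<union> C) s = dirichlet_D B s + dirichlet_D C s"
proof -
  have "((\<lambda>x. (of_nat x :: complex) powr (-s)) has_sum (dirichlet_D B s + dirichlet_D C s)) (B \<union> C)"
    using assms by (intro has_sum_Un_disjoint has_sum_dirichlet_D) auto
  moreover have "((\<lambda>x. (of_nat x :: complex) powr (-s)) has_sum dirichlet_D (B \<union> C) s) (B \<union> C)"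
    using assms by (intro has_sum_dirichlet_D) auto
  ultimately show ?thesis
    using has_sum_unique by blast
qed

subsection \<open>Residue classes of a Dirichlet series\<close>

lemma norm_nat_powr_diff_le:
  fixes x y :: nat and s :: complex
  assumes "1 \<le> x" "x \<le> y" "0 < \<sigma>" "\<sigma> \<le> Re s" "norm s \<le> K"
  shows "norm ((of_nat y :: complex) powr (-s) - (of_nat x :: complex) powr (-s))
          \<le> (K / \<sigma>) * (real x powr (-\<sigma>) - real y powr (-\<sigma>))"
proof (cases "x = y")
  case True then show ?thesis by simp
next
  case False
  then have xy: "real x < real y" using assms by simp
  define f where "f = (\<lambda>t::real. (of_real t :: complex) powr (-s))"
  \<comment> \<open>\<open>\<phi>\<close> is a real primitive of \<open>K t powr (-\<sigma> - 1)\<close>, which dominates the derivative of \<open>f\<close>\<close>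
  define \<phi> where "\<phi> = (\<lambda>t::real. - (K / \<sigma>) * t powr (-\<sigma>))"
  have fd: "(f has_vector_derivative (-s * (of_real t) powr (-s - 1))) (at t within T)" if "t > 0" for t T
    unfolding f_def
    by (rule has_vector_derivative_real_field, rule has_field_derivative_powr)
       (use that in \<open>simp add: complex_nonpos_Reals_iff\<close>)
  have pd: "(\<phi> has_vector_derivative (K * t powr (-\<sigma> - 1))) (at t within T)" if "t > 0" for t T
  proof -
    have "((\<lambda>t. t powr (-\<sigma>)) has_real_derivative (-\<sigma>) * t powr (-\<sigma> - 1)) (at t within T)"
      using has_real_derivative_powr[OF that] by (rule has_field_derivative_at_within)
    then have "(\<phi> has_real_derivative - (K / \<sigma>) * ((-\<sigma>) * t powr (-\<sigma> - 1))) (at t within T)"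
      unfolding \<phi>_def by (rule DERIV_cmult)
    then show ?thesis using assms(3) by (simp add: has_real_derivative_iff_has_vector_derivative)
  qed
  have "norm (f (real y) - f (real x)) \<le> \<phi> (real y) - \<phi> (real x)"
  proof (rule differentiable_bound_general[OF xy])
    show "continuous_on {real x..real y} f" "continuous_on {real x..real y} \<phi>"
      using assms(1) by (auto intro!: continuous_at_imp_continuous_on
          has_vector_derivative_continuous[OF fd] has_vector_derivative_continuous[OF pd])
    fix t assume t: "real x < t" "t < real y"
    then have t1: "t \<ge> 1" using assms(1) by simp
    show "(f has_vector_derivative (-s * (of_real t) powr (-s - 1))) (at t)" using fd t1 by simp
    show "(\<phi> has_vector_derivative (K * t powr (-\<sigma> - 1))) (at t)" using pd t1 by simp
    have "norm (-s * (of_real t :: complex) powr (-s - 1)) = norm s * t powr (- Re s - 1)"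
      using t1 by (simp add: norm_mult norm_powr_real_powr)
    also have "\<dots> \<le> K * t powr (-\<sigma> - 1)"
      using t1 assms order_trans[OF norm_ge_zero[of s] assms(5)] by (intro mult_mono powr_mono) auto
    finally show "norm (-s * (of_real t :: complex) powr (-s - 1)) \<le> K * t powr (-\<sigma> - 1)" .
  qed
  then show ?thesis unfolding f_def \<phi>_def by (simp add: algebra_simps)
qed

lemma holomorphic_on_suminf_interleaved_powr_diff:
  fixes x y :: "nat \<Rightarrow> nat"
  assumes x: "\<And>k. Suc k \<le> x k" and xy: "\<And>k. x k \<le> y k" and yx: "\<And>k. y k \<le> x (Suc k)"
  shows "(\<lambda>s. \<Sum>k. (of_nat (y k) :: complex) powr (-s) - of_nat (x k) powr (-s))
           holomorphic_on {s. 0 < Re s}"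
proof (rule holomorphic_on_suminf_locally_dominated[OF open_halfspace_Re_gt])
  show "(\<lambda>s. (of_nat (y k) :: complex) powr (-s) - of_nat (x k) powr (-s))
          holomorphic_on {s. 0 < Re s}" for k
    by (intro holomorphic_intros)
  fix z assume "z \<in> {s. 0 < Re s}"
  define d where "d = Re z / 2"
  define K where "K = norm z + d"
  have "0 < d" using \<open>z \<in> {s. 0 < Re s}\<close> by (simp add: d_def)
  have near: "d \<le> Re w \<and> norm w \<le> K" if "w \<in> cball z d" for w
  proof
    show "d \<le> Re w" using Re_ge_of_mem_cball[OF that] by (simp add: d_def)
    show "norm w \<le> K"
      using that norm_triangle_ineq2[of w z] unfolding K_def by (simp add: dist_norm norm_minus_commute)
  qed
  \<comment> \<open>the differences are dominated by the telescoping series of \<open>u k = x k powr -d\<close>\<close>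
  define u where "u k = real (x k) powr (-d)" for k
  have "u \<longlonglongrightarrow> 0"
  proof (rule Lim_null_comparison)
    show "(\<lambda>k. real (Suc k) powr (-d)) \<longlonglongrightarrow> 0"
      using \<open>0 < d\<close> by real_asymp
    have "real (x k) powr (-d) \<le> real (Suc k) powr (-d)" for k
      using x[of k] \<open>0 < d\<close> by (intro powr_mono2') auto
    then show "\<forall>\<^sub>F k in sequentially. norm (u k) \<le> real (Suc k) powr (-d)"
      by (intro always_eventually allI) (simp add: u_def)
  qed
  have bound: "norm ((of_nat (y k) :: complex) powr (-w) - of_nat (x k) powr (-w))
                 \<le> (K / d) * (u k - u (Suc k))" if "w \<in> cball z d" for k w
  proof -
    have "1 \<le> x k" using x[of k] by simp
    have "norm ((of_nat (y k) :: complex) powr (-w) - of_nat (x k) powr (-w))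
          \<le> (K / d) * (real (x k) powr (-d) - real (y k) powr (-d))"
      using near[OF that] by (intro norm_nat_powr_diff_le[OF \<open>1 \<le> x k\<close> xy \<open>0 < d\<close>]) auto
    also have "\<dots> \<le> (K / d) * (u k - u (Suc k))"
    proof (rule mult_left_mono)
      have "real (x (Suc k)) powr (-d) \<le> real (y k) powr (-d)"
        using yx[of k] xy[of k] \<open>1 \<le> x k\<close> \<open>0 < d\<close> by (intro powr_mono2') auto
      then show "real (x k) powr (-d) - real (y k) powr (-d) \<le> u k - u (Suc k)"
        by (simp add: u_def)
      show "0 \<le> K / d" using \<open>0 < d\<close> by (simp add: K_def)
    qed
    finally show ?thesis .
  qed
  have "cball z d \<subseteq> {s. 0 < Re s}"
    using near \<open>0 < d\<close> by fastforce
  moreover have "summable (\<lambda>k. (K / d) * (u k - u (Suc k)))"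
    using telescope_summable'[OF \<open>u \<longlonglongrightarrow> 0\<close>] by (rule summable_mult)
  ultimately show "\<exists>d>0. cball z d \<subseteq> {s. 0 < Re s} \<and> (\<exists>M. summable M \<and>
      (\<forall>k. \<forall>w\<in>cball z d. norm ((of_nat (y k) :: complex) powr (-w) - of_nat (x k) powr (-w)) \<le> M k))"
    using \<open>0 < d\<close> bound by blast
qed

lemma suminf_residue_classes:
  fixes f :: "nat \<Rightarrow> 'a::real_normed_field"
  assumes "summable f" and "0 < m" and classes: "\<And>r. r < m \<Longrightarrow> summable (\<lambda>k. f (m * k + c + r))"
  shows "suminf f = (\<Sum>n<c. f n) + of_nat m * (\<Sum>k. f (m * k + c))
                    + (\<Sum>r<m. \<Sum>k. f (m * k + c + r) - f (m * k + c))"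
proof -
  have "(\<lambda>n. f (n + c)) sums (\<Sum>n. f (n + c))"
    using \<open>summable f\<close> by (intro summable_sums) simp
  then have "(\<lambda>k. \<Sum>n\<in>{k * m..<k * m + m}. f (n + c)) sums (\<Sum>n. f (n + c))"
    using \<open>0 < m\<close> by (rule sums_group)
  moreover have "(\<Sum>n\<in>{k * m..<k * m + m}. f (n + c)) = (\<Sum>r<m. f (m * k + c + r))" for k
    using sum.shift_bounds_nat_ivl[of "\<lambda>n. f (n + c)" 0 "k * m" m]
    by (simp add: atLeast0LessThan ac_simps)
  ultimately have "(\<Sum>n. f (n + c)) = (\<Sum>k. \<Sum>r<m. f (m * k + c + r))"
    by (simp add: sums_iff)
  also have "\<dots> = (\<Sum>r<m. \<Sum>k. f (m * k + c + r))"
    using classes by (intro suminf_sum) auto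
  also have "\<dots> = (\<Sum>r<m. (\<Sum>k. f (m * k + c)) + (\<Sum>k. f (m * k + c + r) - f (m * k + c)))"
  proof (rule sum.cong[OF refl])
    fix r assume "r \<in> {..<m}"
    then have "summable (\<lambda>k. f (m * k + c))" "summable (\<lambda>k. f (m * k + c + r))"
      using classes[of 0] classes[of r] \<open>0 < m\<close> by auto
    then show "(\<Sum>k. f (m * k + c + r)) = (\<Sum>k. f (m * k + c)) + (\<Sum>k. f (m * k + c + r) - f (m * k + c))"
      by (subst suminf_add) (auto intro: summable_diff)
  qed
  also have "\<dots> = of_nat m * (\<Sum>k. f (m * k + c)) + (\<Sum>r<m. \<Sum>k. f (m * k + c + r) - f (m * k + c))"
    by (simp add: sum.distrib)
  finally show ?thesis
    using suminf_split_initial_segment[OF \<open>summable f\<close>, of c] by (simp add: ac_simps)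
qed

lemma dirichlet_D_residue_class_decomposition:
  assumes "infinite E" and "0 \<notin> E" and "0 < m"
  obtains W where "W holomorphic_on {s. 0 < Re s}"
    and "\<And>s. 1 < Re s \<Longrightarrow>
           dirichlet_D E s = W s + of_nat m * dirichlet_D (range (\<lambda>k. nth_elem E (m * k + c))) s"
proof -
  define e where "e = nth_elem E"
  have e: "Suc n \<le> e n" for n
    unfolding e_def using assms(1,2) by (rule Suc_le_nth_elem)
  have "strict_mono e"
    unfolding e_def using assms(1) by (rule strict_mono_nth_elem)
  have class_ge: "Suc k \<le> e (m * k + c + r)" for k r
  proof -
    have "k \<le> m * k" using \<open>0 < m\<close> by simp
    then show ?thesis using e[of "m * k + c + r"] by linarith
  qed
  define W where "W s =
      (\<Sum>n<c. (of_nat (e n) :: complex) powr (-s))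
    + (\<Sum>r<m. \<Sum>k. of_nat (e (m * k + c + r)) powr (-s) - of_nat (e (m * k + c)) powr (-s))" for s
  have "(\<lambda>s. \<Sum>k. (of_nat (e (m * k + c + r)) :: complex) powr (-s) - of_nat (e (m * k + c)) powr (-s))
          holomorphic_on {s. 0 < Re s}" if "r < m" for r
  proof (rule holomorphic_on_suminf_interleaved_powr_diff)
    show "Suc k \<le> e (m * k + c)" for k
      using class_ge[of k 0] by simp
    show "e (m * k + c) \<le> e (m * k + c + r)" for k
      using \<open>strict_mono e\<close> by (simp add: strict_mono_less_eq)
    show "e (m * k + c + r) \<le> e (m * Suc k + c)" for k
      using \<open>strict_mono e\<close> \<open>r < m\<close> by (simp add: strict_mono_less_eq)
  qed
  then have "W holomorphic_on {s. 0 < Re s}"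
    unfolding W_def by (intro holomorphic_intros) auto
  moreover have "dirichlet_D E s = W s + of_nat m * dirichlet_D (range (\<lambda>k. e (m * k + c))) s"
    if "1 < Re s" for s
  proof -
    have "strict_mono (\<lambda>k. e (m * k + c))"
      unfolding e_def using assms(1,3) by (rule strict_mono_nth_elem_affine)
    then have "dirichlet_D (range (\<lambda>k. e (m * k + c))) s = (\<Sum>k. of_nat (e (m * k + c)) powr (-s))"
      unfolding dirichlet_D_def by (simp add: nth_elem_range)
    moreover have "dirichlet_D E s = W s + of_nat m * (\<Sum>k. of_nat (e (m * k + c)) powr (-s))"
      unfolding dirichlet_D_def W_def e_def[symmetric]
    proof (rule trans[OF suminf_residue_classes[OF _ \<open>0 < m\<close>]])
      show "summable (\<lambda>n. (of_nat (e n) :: complex) powr (-s))"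
        using e \<open>1 < Re s\<close> by (rule summable_norm_cancel[OF summable_norm_nat_dirichlet_series])
      show "summable (\<lambda>k. (of_nat (e (m * k + c + r)) :: complex) powr (-s))" for r
        using class_ge \<open>1 < Re s\<close> by (rule summable_norm_cancel[OF summable_norm_nat_dirichlet_series])
    qed (simp add: algebra_simps)
    ultimately show ?thesis by simp
  qed
  ultimately show ?thesis
    using that by (simp add: e_def)
qed

lemma holomorphic_on_if_Un:
  assumes "f holomorphic_on U" and "g holomorphic_on V" and "open U" and "open V"
    and "\<And>s. s \<in> U \<inter> V \<Longrightarrow> f s = g s"
  shows "(\<lambda>s. if s \<in> U then f s else g s) holomorphic_on (U \<union> V)"
proof (rule holomorphic_on_Un)
  show "(\<lambda>s. if s \<in> U then f s else g s) holomorphic_on U"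
    using assms(1) by (rule holomorphic_transform) simp
  show "(\<lambda>s. if s \<in> U then f s else g s) holomorphic_on V"
    using assms(2) by (rule holomorphic_transform) (use assms(5) in auto)
qed (use assms in auto)

lemma zeta_B_eq_exp_decomposition:
  assumes "infinite A" and A_ge: "\<forall>a\<in>A. 2 \<le> a" and "A' \<subseteq> A" and "infinite A'"
    and heat: "\<exists>C>0. \<exists>\<delta>>0. \<forall>t::real. 0 < t \<and> t < \<delta> \<longrightarrow>
            summable (\<lambda>n. exp (- real (nth_elem A' n) * t)) \<and>
            (\<Sum>n. exp (- real (nth_elem A' n) * t)) \<le> C * t powr (-1/2)"
    and "infinite (A - A')" and "0 < m"
  obtains H where "H holomorphic_on {s. 1/2 < Re s}"
    and "\<And>s. 1 < Re s \<Longrightarrow>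
           zeta_B A s = exp (H s + of_nat m * dirichlet_D (range (\<lambda>k. nth_elem (A - A') (m * k + c))) s)"
proof -
  have "0 \<notin> A" using A_ge by force
  obtain W where "W holomorphic_on {s. 0 < Re s}" and W: "\<And>s. 1 < Re s \<Longrightarrow>
      dirichlet_D (A - A') s = W s + of_nat m * dirichlet_D (range (\<lambda>k. nth_elem (A - A') (m * k + c))) s"
    using dirichlet_D_residue_class_decomposition[OF \<open>infinite (A - A')\<close> _ \<open>0 < m\<close>] \<open>0 \<notin> A\<close> by blast
  obtain C \<delta> where "0 < \<delta>" and \<delta>: "\<forall>t::real. 0 < t \<and> t < \<delta> \<longrightarrow>
      summable (\<lambda>n. exp (- real (nth_elem A' n) * t)) \<and>
      (\<Sum>n. exp (- real (nth_elem A' n) * t)) \<le> C * t powr (-1/2)"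
    using heat by blast
  have "dirichlet_D A' holomorphic_on {s. 1/2 < Re s}"
    unfolding dirichlet_D_def
  proof (rule holomorphic_on_nat_dirichlet_series)
    have A'_ge: "Suc n \<le> nth_elem A' n" for n
      using Suc_le_nth_elem \<open>infinite A'\<close> \<open>0 \<notin> A\<close> \<open>A' \<subseteq> A\<close> by blast
    then show "0 < nth_elem A' n" for n
      by (metis zero_less_Suc order_less_le_trans)
    show "summable (\<lambda>n. real (nth_elem A' n) powr (-\<sigma>))" if "1/2 < \<sigma>" for \<sigma>
    proof (rule summable_powr_of_heat_trace_bound)
      show "mono (nth_elem A')"
        using strict_mono_nth_elem[OF \<open>infinite A'\<close>] by (rule strict_mono_mono)
      show "\<forall>t. 0 < t \<and> t < \<delta> \<longrightarrow> summable (\<lambda>k. exp (- real (nth_elem A' k) * t)) \<and>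
              (\<Sum>k. exp (- real (nth_elem A' k) * t)) \<le> C * t powr (- (1/2))"
        using \<delta> by simp
    qed (use A'_ge \<open>0 < \<delta>\<close> that in auto)
  qed
  moreover have "log_euler_remainder (nth_elem A) holomorphic_on {s. 1/2 < Re s}"
    using nth_elem_ge[OF \<open>infinite A\<close> A_ge] by (rule holomorphic_log_euler_remainder)
  moreover have "W holomorphic_on {s. 1/2 < Re s}"
    using \<open>W holomorphic_on {s. 0 < Re s}\<close> by (rule holomorphic_on_subset) auto
  ultimately have "(\<lambda>s. log_euler_remainder (nth_elem A) s + dirichlet_D A' s + W s)
                     holomorphic_on {s. 1/2 < Re s}"
    by (intro holomorphic_intros)
  moreover have "zeta_B A s = exp (log_euler_remainder (nth_elem A) s + dirichlet_D A' s + W s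
      + of_nat m * dirichlet_D (range (\<lambda>k. nth_elem (A - A') (m * k + c))) s)" if "1 < Re s" for s
  proof -
    have "A = A' \<union> (A - A')" using \<open>A' \<subseteq> A\<close> by blast
    then have "dirichlet_D A s = dirichlet_D A' s + dirichlet_D (A - A') s"
      using dirichlet_D_Un[of A' "A - A'"] assms \<open>0 \<notin> A\<close> that by auto
    then show ?thesis
      using zeta_B_eq_exp[OF \<open>infinite A\<close> A_ge that] W[OF that] by (simp add: algebra_simps)
  qed
  ultimately show ?thesis
    using that by blast
qed

theorem proposition2p2:
  fixes A A' :: "nat set" and i j :: nat and U :: "complex set" and f :: "complex \<Rightarrow> complex"
  assumes "infinite A" and "\<forall>a\<in>A. 2 \<le> a"
    and "A' \<subseteq> A" and "infinite A'"
    and "\<exists>C>0. \<exists>\<delta>>0. \<forall>t::real. 0 < t \<and> t < \<delta> \<longrightarrow>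
            summable (\<lambda>n. exp (- real (nth_elem A' n) * t)) \<and>
            (\<Sum>n. exp (- real (nth_elem A' n) * t)) \<le> C * t powr (-1/2)"
    and "infinite (A - A')"
    and "open U" and "connected U" and "U \<inter> {s. 1 < Re s} \<noteq> {}"
    and "f holomorphic_on U"
    and "\<forall>s\<in>U. 1 < Re s \<longrightarrow>
            f s = dirichlet_D ((\<lambda>n. nth_elem (A - A') (2^i * n + j - 1)) ` {1..}) s"
  shows "\<exists>Z. Z holomorphic_on ((U \<inter> {s. 1/2 < Re s}) \<union> {s. 1 < Re s})
           \<and> (\<forall>s. 1 < Re s \<longrightarrow> Z s = zeta_B A s)
           \<and> (\<forall>s\<in>U \<inter> {s. 1/2 < Re s}. Z s \<noteq> 0)"
  \<comment> \<open>connectedness of \<open>U\<close> is only needed for uniqueness of the continuation, not used here\<close>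
proof -
  define B where "B = (\<lambda>n. nth_elem (A - A') (2^i * n + j - 1)) ` {1..}"
  have B: "B = range (\<lambda>k. nth_elem (A - A') (2^i * k + (2^i + j - 1)))"
    unfolding B_def by (rule image_atLeast_1_affine) simp
  obtain H where "H holomorphic_on {s. 1/2 < Re s}"
    and zeta: "\<And>s. 1 < Re s \<Longrightarrow> zeta_B A s = exp (H s + of_nat (2^i) * dirichlet_D B s)"
    using zeta_B_eq_exp_decomposition[OF assms(1-6), of "2^i"] unfolding B by auto
  have "infinite B"
    unfolding B using strict_mono_nth_elem_affine[OF assms(6)]
    by (intro range_inj_infinite strict_mono_imp_inj_on) simp
  have "B \<subseteq> A - A'"
    unfolding B_def nth_elem_def using enumerate_in_set[OF assms(6)] by auto
  with assms(2) have "0 \<notin> B" by force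
  define g where "g s = (if s \<in> U then f s else dirichlet_D B s)" for s
  have "g holomorphic_on U \<union> {s. 1 < Re s}"
    unfolding g_def using assms(7,10,11) holomorphic_dirichlet_D[OF \<open>infinite B\<close> \<open>0 \<notin> B\<close>]
    by (intro holomorphic_on_if_Un) (auto simp: B_def open_halfspace_Re_gt)
  with \<open>H holomorphic_on {s. 1/2 < Re s}\<close>
  have "(\<lambda>s. exp (H s + of_nat (2^i) * g s)) holomorphic_on {s. 1/2 < Re s} \<inter> (U \<union> {s. 1 < Re s})"
    by (intro holomorphic_intros) (auto elim: holomorphic_on_subset)
  moreover have "exp (H s + of_nat (2^i) * g s) = zeta_B A s" if "1 < Re s" for s
    using zeta[OF that] assms(11) that by (simp add: g_def B_def)
  ultimately show ?thesis
    by (intro exI[of _ "\<lambda>s. exp (H s + of_nat (2^i) * g s)"]) (auto elim: holomorphic_on_subset)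
qed

end
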